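(* For every $\delta>0$ there exist an instance of a sequential first-price auction with two additive buyers, a selling order and a tie-breaking rule, and a pure subgame perfect equilibrium whose revenue is at most $\delta$ times the Walrasian revenue $\sum_{j\in M}\big(\text{second-highest value } v_{i,j}\text{ among the buyers}\big)$. That is, there are subgame perfect equilibria for additive buyers whose ratio of revenue to the Walrasian revenue is vanishing.
   Context: Setting: a set $M$ of $m$ items and a set of buyers; buyer $i$ is additive, i.e. there are $v_{i,j}\ge 0$ with $v_i(S)=\sum_{j\in S}v_{i,j}$, and utilities are quasi-linear. Items are sold one at a time, each by a sealed-bid first-price auction without reserve price (a highest bidder wins, ties broken by a seller-chosen rule, the winner pays his bid); the seller fixes the selling order and tie-breaking rule. Full information. A pure subgame perfect equilibrium is a profile of pure strategies that is a Nash equilibrium in every subgame; its revenue is the total payment on the equilibrium path. For additive buyers the minimum Walrasian revenue equals the sum over items of the second-highest value for that item, which is the Walrasian revenue used here. *)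

theory Defs
  imports Complex_Main
begin

text \<open>Buyers are 0..<n, items are 0..<m and are sold in the order 0,1,...,m-1
  (the selling order is encoded by the labelling of the items).
  A history is the list of bid profiles submitted in the auctions held so far.\<close>

type_synonym bidvec = "nat \<Rightarrow> real"
type_synonym history = "bidvec list"
type_synonym strategy = "history \<Rightarrow> real"

definition valid_tiebreak :: "nat \<Rightarrow> (nat \<Rightarrow> bidvec \<Rightarrow> nat) \<Rightarrow> bool" where
  "valid_tiebreak n tb \<longleftrightarrow>
     (\<forall>j b. tb j b < n \<and> (\<forall>i<n. b i \<le> b (tb j b)))"

definition valid_strategy :: "strategy \<Rightarrow> bool" where
  "valid_strategy s \<longleftrightarrow> (\<forall>h. 0 \<le> s h)"

definition valid_history :: "nat \<Rightarrow> history \<Rightarrow> bool" where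
  "valid_history n h \<longleftrightarrow>
     (\<forall>b\<in>set h. \<forall>i. (i < n \<longrightarrow> 0 \<le> b i) \<and> (n \<le> i \<longrightarrow> b i = 0))"

fun play :: "nat \<Rightarrow> (nat \<Rightarrow> strategy) \<Rightarrow> nat \<Rightarrow> history \<Rightarrow> history" where
  "play n s 0 h = h"
| "play n s (Suc k) h = play n s k (h @ [(\<lambda>i. if i < n then s i h else 0)])"

definition winner :: "(nat \<Rightarrow> bidvec \<Rightarrow> nat) \<Rightarrow> history \<Rightarrow> nat \<Rightarrow> nat" where
  "winner tb H j = tb j (H ! j)"

text \<open>Quasi-linear utility of buyer i (additive values v) accrued from the
  auctions length h, ..., m-1 when play starts at history h.
  (Payoffs from earlier auctions are fixed by h and do not affect incentives.)\<close>
definition cont_utility ::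
  "nat \<Rightarrow> nat \<Rightarrow> (nat \<Rightarrow> nat \<Rightarrow> real) \<Rightarrow> (nat \<Rightarrow> bidvec \<Rightarrow> nat)
    \<Rightarrow> (nat \<Rightarrow> strategy) \<Rightarrow> nat \<Rightarrow> history \<Rightarrow> real" where
  "cont_utility n m v tb s i h =
     (let H = play n s (m - length h) h in
      \<Sum>j\<in>{length h..<m}. if winner tb H j = i then v i j - (H ! j) i else 0)"

definition pure_SPE ::
  "nat \<Rightarrow> nat \<Rightarrow> (nat \<Rightarrow> nat \<Rightarrow> real) \<Rightarrow> (nat \<Rightarrow> bidvec \<Rightarrow> nat)
    \<Rightarrow> (nat \<Rightarrow> strategy) \<Rightarrow> bool" where
  "pure_SPE n m v tb s \<longleftrightarrow>
     (\<forall>i<n. valid_strategy (s i)) \<and>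
     (\<forall>h. valid_history n h \<and> length h < m \<longrightarrow>
        (\<forall>i<n. \<forall>s'. valid_strategy s' \<longrightarrow>
            cont_utility n m v tb (s(i := s')) i h \<le> cont_utility n m v tb s i h))"

definition revenue ::
  "nat \<Rightarrow> nat \<Rightarrow> (nat \<Rightarrow> bidvec \<Rightarrow> nat) \<Rightarrow> (nat \<Rightarrow> strategy) \<Rightarrow> real" where
  "revenue n m tb s =
     (let H = play n s m [] in \<Sum>j<m. (H ! j) (winner tb H j))"

text \<open>Second-highest value for item j among buyers 0..<n (n \<ge> 2).\<close>
definition second_highest :: "nat \<Rightarrow> (nat \<Rightarrow> nat \<Rightarrow> real) \<Rightarrow> nat \<Rightarrow> real" where
  "second_highest n v j =
     Max {min (v i j) (v k j) | i k. i < n \<and> k < n \<and> i \<noteq> k}"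

definition walrasian_revenue :: "nat \<Rightarrow> nat \<Rightarrow> (nat \<Rightarrow> nat \<Rightarrow> real) \<Rightarrow> real" where
  "walrasian_revenue n m v = (\<Sum>j<m. second_highest n v j)"

end

theory Submission
  imports Defs
begin

text \<open>Both buyers value the first item at 1; only buyer 1 values the
  second, at 2. Buyer 0 threatens to bid 2 on the second item whenever buyer 1 has outbid him on
  the first one; since the ties on the second item go to buyer 1, this threat costs buyer 0 nothing,
  and it wipes out buyer 1's whole gain on the second item. Hence nobody bids on the first item,
  buyer 1 gets the second one for free, and the equilibrium revenue is 0, while the Walrasian
  revenue is min 1 1 + min 0 2 = 1.\<close>

definition bid_profile :: "nat \<Rightarrow> (nat \<Rightarrow> strategy) \<Rightarrow> history \<Rightarrow> bidvec" where
  "bid_profile n s h = (\<lambda>i. if i < n then s i h else 0)"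

lemma play_Suc_bid_profile: "play n s (Suc k) h = play n s k (h @ [bid_profile n s h])"
  by (simp add: bid_profile_def)

lemma play_extends: "\<exists>t. play n s k h = h @ t"
proof (induction k arbitrary: h)
  case (Suc k)
  then obtain t where "play n s k (h @ [bid_profile n s h]) = (h @ [bid_profile n s h]) @ t"
    by blast
  then show ?case
    by (simp only: play_Suc_bid_profile) simp
qed simp

lemma cont_utility_complete:
  "length h = m \<Longrightarrow> cont_utility n m v tb s i h = 0"
  by (simp add: cont_utility_def)

lemma cont_utility_step:
  fixes n :: nat and s :: "nat \<Rightarrow> strategy"
  assumes "length h < m"
  defines "b \<equiv> bid_profile n s h"
  shows "cont_utility n m v tb s i h =
           (if tb (length h) b = i then v i (length h) - b i else 0)
           + cont_utility n m v tb s i (h @ [b])"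
proof -
  let ?H = "play n s (m - length h) h"
  have H: "?H = play n s (m - Suc (length h)) (h @ [b])"
    using assms by (simp add: Suc_diff_Suc[symmetric] b_def bid_profile_def)
  obtain t where "?H = h @ [b] @ t"
    using play_extends unfolding H by (metis append.assoc)
  then have "?H ! length h = b" by simp
  moreover have "{length h..<m} = insert (length h) {Suc (length h)..<m}"
    using assms by auto
  ultimately show ?thesis
    by (simp add: cont_utility_def H winner_def Let_def)
qed

lemma second_highest_two_buyers: "second_highest 2 v j = min (v 0 j) (v 1 j)"
proof -
  have "{min (v i j) (v k j) | i k. i < 2 \<and> k < 2 \<and> i \<noteq> k} = {min (v 0 j) (v 1 j)}"
    by (auto simp: less_2_cases_iff min.commute)
  then show ?thesis
    by (simp add: second_highest_def)
qed

definition threat_values :: "nat \<Rightarrow> nat \<Rightarrow> real" where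
  "threat_values i j = (if j = 0 \<and> i < 2 then 1 else if j = 1 \<and> i = 1 then 2 else 0)"

definition threat_tiebreak :: "nat \<Rightarrow> bidvec \<Rightarrow> nat" where
  "threat_tiebreak j b =
     (if j = 0 then (if b 1 > b 0 then 1 else 0) else (if b 0 > b 1 then 0 else 1))"

definition threat_strategy :: "nat \<Rightarrow> strategy" where
  "threat_strategy i h = (if length h = 1 \<and> (h ! 0) 1 > (h ! 0) 0 then 2 else 0)"

lemma valid_tiebreak_threat: "valid_tiebreak 2 threat_tiebreak"
  by (auto simp: valid_tiebreak_def threat_tiebreak_def less_2_cases_iff)

lemma threat_second_auction:
  assumes "length h = 1" and "i < 2" and "\<And>x. 0 \<le> s' x"
  shows "cont_utility 2 2 threat_values threat_tiebreak (threat_strategy(i := s')) i h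
       \<le> cont_utility 2 2 threat_values threat_tiebreak threat_strategy i h"
  using assms
  by (simp add: cont_utility_step cont_utility_complete bid_profile_def)
     (auto simp: threat_tiebreak_def threat_values_def threat_strategy_def less_2_cases_iff)

lemma threat_first_auction:
  assumes "i < 2" and "\<And>x. 0 \<le> s' x"
  shows "cont_utility 2 2 threat_values threat_tiebreak (threat_strategy(i := s')) i []
       \<le> cont_utility 2 2 threat_values threat_tiebreak threat_strategy i []"
  using assms
  by (simp add: cont_utility_step cont_utility_complete bid_profile_def)
     (auto simp: threat_tiebreak_def threat_values_def threat_strategy_def less_2_cases_iff)

lemma pure_SPE_threat: "pure_SPE 2 2 threat_values threat_tiebreak threat_strategy"
  unfolding pure_SPE_def
proof (intro conjI allI impI)
  fix i :: nat
  show "valid_strategy (threat_strategy i)"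
    by (simp add: valid_strategy_def threat_strategy_def)
next
  fix h :: history and i :: nat and s' :: strategy
  assume h: "valid_history 2 h \<and> length h < 2" and i: "i < 2" and s': "valid_strategy s'"
  have s'_nonneg: "\<And>x. 0 \<le> s' x"
    using s' by (simp add: valid_strategy_def)
  have "h = [] \<or> length h = 1"
    using h by (cases h) auto
  then show "cont_utility 2 2 threat_values threat_tiebreak (threat_strategy(i := s')) i h
           \<le> cont_utility 2 2 threat_values threat_tiebreak threat_strategy i h"
    using threat_first_auction threat_second_auction i s'_nonneg by blast
qed

lemma walrasian_revenue_threat: "walrasian_revenue 2 2 threat_values = 1"
  by (simp add: walrasian_revenue_def second_highest_two_buyers threat_values_def
      lessThan_nat_numeral)

lemma revenue_threat: "revenue 2 2 threat_tiebreak threat_strategy = 0"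
  by (simp add: revenue_def lessThan_nat_numeral numeral_2_eq_2 winner_def
      threat_strategy_def threat_tiebreak_def)

theorem mainTheorem4:
  fixes \<delta> :: real
  assumes "\<delta> > 0"
  shows "\<exists>(m::nat) (v::nat \<Rightarrow> nat \<Rightarrow> real) tb s.
           (\<forall>i j. 0 \<le> v i j) \<and>
           valid_tiebreak 2 tb \<and>
           pure_SPE 2 m v tb s \<and>
           0 < walrasian_revenue 2 m v \<and>
           revenue 2 m tb s \<le> \<delta> * walrasian_revenue 2 m v"
proof (intro exI conjI)
  show "\<forall>i j. 0 \<le> threat_values i j"
    by (simp add: threat_values_def)
  show "revenue 2 2 threat_tiebreak threat_strategy \<le> \<delta> * walrasian_revenue 2 2 threat_values"
    using assms by (simp add: revenue_threat walrasian_revenue_threat)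
qed (simp_all add: valid_tiebreak_threat pure_SPE_threat walrasian_revenue_threat)

end
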